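(* Let $p,q>0$ and $\alpha,\beta,\nu,\gamma\in\mathbb{R}$. Let $f:\mathbb{N}\to[0,\infty)$ be a function with $f(0)=0$, and let $\{|n\rangle\}_{n\in\mathbb{N}}$ be an orthonormal basis of a Hilbert space. Define operators $a,a^{\dagger},N,K$ on the span of this basis by $$a|n\rangle=\sqrt{f(n)}\,|n-1\rangle,\quad a^{\dagger}|n\rangle=\sqrt{f(n+1)}\,|n+1\rangle,\quad N|n\rangle=n|n\rangle,\quad K|n\rangle=(-1)^n|n\rangle$$ (with $a|0\rangle=0$), and let $q^{\alpha N+\beta}$ act by $q^{\alpha N+\beta}|n\rangle=q^{\alpha n+\beta}|n\rangle$. Suppose that these operators satisfy $$aa^{\dagger}-p^{\nu}a^{\dagger}a=(1+2\gamma K)\,q^{\alpha N+\beta}$$ on every basis vector $|n\rangle$. Then for all $n\in\mathbb{N}$, $$f(n)=\begin{cases} q^{\beta}\left(\dfrac{p^{n\nu}-q^{n\alpha}}{p^{\nu}-q^{\alpha}}+2\gamma\,\dfrac{p^{n\nu}-(-1)^{n}q^{n\alpha}}{p^{\nu}+q^{\alpha}}\right), & \text{if } p^{\nu}\neq q^{\alpha},\\[2ex] \left(n+2\gamma\,\dfrac{1-(-1)^{n}}{2}\right)q^{(n-1)\alpha+\beta}, & \text{if } p^{\nu}=q^{\alpha}.\end{cases}$$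
   Context: This is the Fock realization of the $(p,q;\alpha,\beta,\nu;\gamma)$-deformed oscillator algebra, generated by $a,a^{\dagger},N,K$ subject to $aa^{\dagger}-p^{\nu}a^{\dagger}a=(1+2\gamma K)q^{\alpha N+\beta}$, $[N,a]=-a$, $[N,a^{\dagger}]=a^{\dagger}$, $Ka=-aK$, $Ka^{\dagger}=-a^{\dagger}K$, $[N,K]=0$, $N^\dagger=N$, $K^\dagger=K$; the function $f$ is called the structure function of the deformation. Here $\mathbb{N}=\{0,1,2,\dots\}$. *)

theory Defs
  imports Complex_Main
begin

text \<open>Vectors in the span of the orthonormal basis are represented by their
(finitely supported) coefficient sequences nat => real; ket n is the basis vector.\<close>

definition ket :: "nat \<Rightarrow> (nat \<Rightarrow> real)" where
  "ket n = (\<lambda>m. if m = n then 1 else 0)"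

definition ann :: "(nat \<Rightarrow> real) \<Rightarrow> (nat \<Rightarrow> real) \<Rightarrow> (nat \<Rightarrow> real)" where
  "ann f v = (\<lambda>m. sqrt (f (Suc m)) * v (Suc m))"

definition cre :: "(nat \<Rightarrow> real) \<Rightarrow> (nat \<Rightarrow> real) \<Rightarrow> (nat \<Rightarrow> real)" where
  "cre f v = (\<lambda>m. if m = 0 then 0 else sqrt (f m) * v (m - 1))"

definition numop :: "(nat \<Rightarrow> real) \<Rightarrow> (nat \<Rightarrow> real)" where
  "numop v = (\<lambda>m. real m * v m)"

definition Kop :: "(nat \<Rightarrow> real) \<Rightarrow> (nat \<Rightarrow> real)" where
  "Kop v = (\<lambda>m. (-1) ^ m * v m)"

definition qpowop :: "real \<Rightarrow> real \<Rightarrow> real \<Rightarrow> (nat \<Rightarrow> real) \<Rightarrow> (nat \<Rightarrow> real)" where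
  "qpowop q \<alpha> \<beta> v = (\<lambda>m. q powr (\<alpha> * real m + \<beta>) * v m)"

end

theory Submission
  imports Defs
begin

text \<open>Reading off the n-th coordinate of the commutation relation applied to the basis vector
  of index n gives the first-order linear recurrence
  f(n+1) = p^\<nu> f(n) + q^\<beta> (q^(n\<alpha>) + 2\<gamma> (-q^\<alpha>)^n)  with  f(0) = 0.
  Its forcing term is a sum of two geometric sequences, so by uniqueness f is the matching
  combination of the particular solutions (P^n - r^n)/(P - r) for a geometric forcing r^n with
  r \<noteq> P, and n P^n / P in the resonant case r = P; resonance can only happen for
  r = q^\<alpha>, since -q^\<alpha> < 0 < p^\<nu>.\<close>

lemma linear_recurrence_unique:
  fixes f g h :: "nat \<Rightarrow> 'a::ring"
  assumes "f 0 = g 0"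
    and "\<And>n. f (Suc n) = a * f n + h n" and "\<And>n. g (Suc n) = a * g n + h n"
  shows "f n = g n"
  by (induction n) (simp_all add: assms)

lemma geometric_particular_solution_step:
  fixes P r :: "'a::field"
  assumes "P \<noteq> r"
  shows "(P ^ Suc n - r ^ Suc n) / (P - r) = P * ((P ^ n - r ^ n) / (P - r)) + r ^ n"
  using assms by (simp add: field_simps)

lemma resonant_particular_solution_step:
  fixes P :: "'a::field_char_0"
  assumes "P \<noteq> 0"
  shows "of_nat (Suc n) * P ^ Suc n / P = P * (of_nat n * P ^ n / P) + P ^ n"
  using assms by (simp add: field_simps)

lemma forced_recurrence_nonresonant:
  fixes f :: "nat \<Rightarrow> 'a::field"
  assumes "f 0 = 0" and rec: "\<And>n. f (Suc n) = P * f n + B * (Q ^ n + c * (- Q) ^ n)"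
    and "P \<noteq> Q" and "P \<noteq> - Q"
  shows "f n = B * ((P ^ n - Q ^ n) / (P - Q) + c * (P ^ n - (-1) ^ n * Q ^ n) / (P + Q))"
proof -
  have "f n = B * ((P ^ n - Q ^ n) / (P - Q) + c * ((P ^ n - (- Q) ^ n) / (P - - Q)))"
  proof (rule linear_recurrence_unique[where a = P and h = "\<lambda>n. B * (Q ^ n + c * (- Q) ^ n)",
        OF _ rec])
    show "B * ((P ^ Suc n - Q ^ Suc n) / (P - Q) + c * ((P ^ Suc n - (- Q) ^ Suc n) / (P - - Q)))
        = P * (B * ((P ^ n - Q ^ n) / (P - Q) + c * ((P ^ n - (- Q) ^ n) / (P - - Q))))
          + B * (Q ^ n + c * (- Q) ^ n)" for n
      unfolding geometric_particular_solution_step[OF \<open>P \<noteq> Q\<close>]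
        geometric_particular_solution_step[OF \<open>P \<noteq> - Q\<close>]
      by (simp add: algebra_simps)
  qed (simp add: \<open>f 0 = 0\<close>)
  then show ?thesis
    by (simp add: power_minus[of Q])
qed

lemma forced_recurrence_resonant:
  fixes f :: "nat \<Rightarrow> 'a::field_char_0"
  assumes "f 0 = 0" and rec: "\<And>n. f (Suc n) = Q * f n + B * (Q ^ n + c * (- Q) ^ n)"
    and "Q \<noteq> 0"
  shows "f n = (of_nat n + c * (1 - (-1) ^ n) / 2) * (Q ^ n / Q * B)"
proof -
  have "Q \<noteq> - Q"
    using \<open>Q \<noteq> 0\<close> by simp
  have "f n = B * (of_nat n * Q ^ n / Q + c * ((Q ^ n - (- Q) ^ n) / (Q - - Q)))"
  proof (rule linear_recurrence_unique[where a = Q and h = "\<lambda>n. B * (Q ^ n + c * (- Q) ^ n)",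
        OF _ rec])
    show "B * (of_nat (Suc n) * Q ^ Suc n / Q + c * ((Q ^ Suc n - (- Q) ^ Suc n) / (Q - - Q)))
        = Q * (B * (of_nat n * Q ^ n / Q + c * ((Q ^ n - (- Q) ^ n) / (Q - - Q))))
          + B * (Q ^ n + c * (- Q) ^ n)" for n
      unfolding resonant_particular_solution_step[OF \<open>Q \<noteq> 0\<close>]
        geometric_particular_solution_step[OF \<open>Q \<noteq> - Q\<close>]
      using \<open>Q \<noteq> 0\<close> by (simp add: field_simps)
  qed (simp add: \<open>f 0 = 0\<close>)
  also have "(Q ^ n - (- Q) ^ n) / (Q - - Q) = (1 - (-1) ^ n) / 2 * (Q ^ n / Q)"
    using \<open>Q \<noteq> 0\<close> by (simp add: power_minus[of Q] field_simps)
  finally show ?thesis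
    by (simp add: algebra_simps)
qed

lemma powr_of_nat_mult: "x > 0 \<Longrightarrow> x powr (real n * a) = (x powr a) ^ n"
  by (metis mult.commute powr_powr powr_realpow powr_gt_zero)

lemma ann_cre_ket_diagonal: "f (Suc n) \<ge> 0 \<Longrightarrow> ann f (cre f (ket n)) n = f (Suc n)"
  by (simp add: ann_def cre_def ket_def)

lemma cre_ann_ket_diagonal: "f n \<ge> 0 \<Longrightarrow> cre f (ann f (ket n)) n = (if n = 0 then 0 else f n)"
  by (cases n) (auto simp: ann_def cre_def ket_def)

lemma qpowop_ket_diagonal:
  "q > 0 \<Longrightarrow> qpowop q \<alpha> \<beta> (ket n) n = q powr \<beta> * (q powr \<alpha>) ^ n"
  using powr_of_nat_mult[of q n \<alpha>] by (simp add: qpowop_def ket_def powr_add mult.commute)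

lemma Kop_ket_diagonal: "Kop v n = (-1) ^ n * v n"
  by (simp add: Kop_def)

lemma structure_function_recurrence:
  fixes p q \<alpha> \<beta> \<nu> \<gamma> :: real and f :: "nat \<Rightarrow> real"
  assumes "q > 0" and "\<And>n. f n \<ge> 0" and "f 0 = 0"
    and rel: "ann f (cre f (ket n)) n - p powr \<nu> * cre f (ann f (ket n)) n
              = qpowop q \<alpha> \<beta> (ket n) n + 2 * \<gamma> * Kop (qpowop q \<alpha> \<beta> (ket n)) n"
  shows "f (Suc n) = p powr \<nu> * f n
           + q powr \<beta> * ((q powr \<alpha>) ^ n + 2 * \<gamma> * (- (q powr \<alpha>)) ^ n)"
proof -
  have "cre f (ann f (ket n)) n = f n"
    using assms(2,3) by (simp add: cre_ann_ket_diagonal)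
  with rel show ?thesis
    using assms(1,2)
    by (simp add: ann_cre_ket_diagonal qpowop_ket_diagonal Kop_ket_diagonal
        power_minus[of "q powr \<alpha>"] algebra_simps)
qed

theorem proposition1:
  fixes p q \<alpha> \<beta> \<nu> \<gamma> :: real and f :: "nat \<Rightarrow> real"
  assumes hp: "p > 0" and hq: "q > 0"
    and fnn: "\<And>n. f n \<ge> 0" and f0: "f 0 = 0"
    and rel: "\<And>n. (\<lambda>m. ann f (cre f (ket n)) m - p powr \<nu> * cre f (ann f (ket n)) m)
                 = (\<lambda>m. qpowop q \<alpha> \<beta> (ket n) m + 2 * \<gamma> * Kop (qpowop q \<alpha> \<beta> (ket n)) m)"
  shows "\<forall>n. f n =
     (if p powr \<nu> \<noteq> q powr \<alpha> then
        q powr \<beta> * ((p powr (real n * \<nu>) - q powr (real n * \<alpha>)) / (p powr \<nu> - q powr \<alpha>)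
          + 2 * \<gamma> * (p powr (real n * \<nu>) - (-1) ^ n * q powr (real n * \<alpha>)) / (p powr \<nu> + q powr \<alpha>))
      else
        (real n + 2 * \<gamma> * (1 - (-1) ^ n) / 2) * q powr ((real n - 1) * \<alpha> + \<beta>))"
proof -
  define P where "P = p powr \<nu>"
  define Q where "Q = q powr \<alpha>"
  define B where "B = q powr \<beta>"
  have pos: "P > 0" "Q > 0" using hp hq by (simp_all add: P_def Q_def)
  have rec: "f (Suc n) = P * f n + B * (Q ^ n + 2 * \<gamma> * (- Q) ^ n)" for n
    using structure_function_recurrence[OF hq fnn f0 fun_cong[OF rel, of n n]]
    by (simp add: P_def Q_def B_def)
  have P_pow: "p powr (real n * \<nu>) = P ^ n" and Q_pow: "q powr (real n * \<alpha>) = Q ^ n" for n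
    using hp hq by (simp_all add: powr_of_nat_mult P_def Q_def)
  show ?thesis
  proof (cases "P = Q")
    case False
    with f0 rec pos
    have "f n = B * ((P ^ n - Q ^ n) / (P - Q) + 2 * \<gamma> * (P ^ n - (-1) ^ n * Q ^ n) / (P + Q))" for n
      by (intro forced_recurrence_nonresonant[where f = f and c = "2 * \<gamma>"]) auto
    with False show ?thesis
      by (simp add: P_pow Q_pow flip: P_def Q_def B_def)
  next
    case True
    have "q powr ((real n - 1) * \<alpha> + \<beta>) = Q ^ n / Q * B" for n
      using hq by (simp add: left_diff_distrib powr_add powr_diff Q_pow flip: Q_def B_def)
    moreover have "f n = (real n + 2 * \<gamma> * (1 - (-1) ^ n) / 2) * (Q ^ n / Q * B)" for n
      using f0 rec pos unfolding True
      by (intro forced_recurrence_resonant[where f = f and c = "2 * \<gamma>"]) auto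
    ultimately show ?thesis
      using True by (simp add: P_def Q_def)
  qed
qed

end
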